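(* Let $a,b>0$, $\chi_1,\chi_2\ge0$, $\lambda_1,\lambda_2,\mu_1,\mu_2>0$ with $b+\chi_2\mu_2>\chi_1\mu_1+M$. Let $0<\mu<\min\{1,\sqrt{\lambda_1/a},\sqrt{\lambda_2/a}\}$, $\tilde\mu\in(\mu,\min\{1,2\mu,\sqrt{\lambda_1/a},\sqrt{\lambda_2/a}\})$, $d>1$. Then for every $i,j\in\{1,2\}$, every $x\in\mathbb R$ and every $u\in\mathcal E_\mu$, $$|\partial_x(\chi_iV_i-\chi_jV_j)(x;u)|\le|\chi_i\mu_i-\chi_j\mu_j|\min\Big\{\frac{C_0}{\sqrt{\lambda_i}},\Big(\frac{1}{\sqrt{\lambda_i-a\mu^2}}+\frac{\mu\sqrt a}{\lambda_i-a\mu^2}\Big)\varphi_\mu(x)\Big\}$$ $$+\chi_j\mu_j\min\Big\{\frac{C_0|\sqrt{\lambda_i}-\sqrt{\lambda_j}|}{\sqrt{\lambda_i\lambda_j}},\Big(\Big|\frac{1}{\sqrt{\lambda_i-a\mu^2}}-\frac{1}{\sqrt{\lambda_j-a\mu^2}}\Big|+\frac{\mu\sqrt a|\lambda_i-\lambda_j|}{(\lambda_i-a\mu^2)(\lambda_j-a\mu^2)}\Big)\varphi_\mu(x)\Big\}.$$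
   Context: $(r)_+=\max\{r,0\}$. $M=\min\{\frac{(\chi_2\mu_2\lambda_2-\chi_1\mu_1\lambda_1)_++\chi_1\mu_1(\lambda_1-\lambda_2)_+}{\lambda_2},\frac{\chi_2\mu_2(\lambda_1-\lambda_2)_++(\chi_2\mu_2\lambda_2-\chi_1\mu_1\lambda_1)_+}{\lambda_1}\}$, $C_0=\frac{a}{b+\chi_2\mu_2-\chi_1\mu_1-M}$, $\varphi_\mu(x)=e^{-\sqrt a\mu x}$, $U^+_\mu=\min\{C_0,\varphi_\mu\}$, $U^-_\mu=\max\{0,\varphi_\mu-d\varphi_{\tilde\mu}\}$, $\mathcal E_\mu=\{u\in C^b_{\rm unif}(\mathbb R): U^-_\mu\le u\le U^+_\mu\}$ where $C^b_{\rm unif}(\mathbb R)$ is the space of bounded uniformly continuous functions. For $i=1,2$, $V_i(x;u)=\mu_i\int_0^\infty\int_{\mathbb R}\frac{e^{-\lambda_i s}}{\sqrt{4\pi s}}e^{-\frac{|x-z|^2}{4s}}u(z)\,dz\,ds$, the bounded solution of $V''-\lambda_iV+\mu_iu=0$. *)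

theory Defs
  imports "HOL-Analysis.Analysis"
begin

definition pos_part :: "real \<Rightarrow> real" where
  "pos_part r = max r 0"

text \<open>Parameters chi, lam, mu are indexed by i in {1,2} (functions nat => real).\<close>

definition Mconst :: "(nat \<Rightarrow> real) \<Rightarrow> (nat \<Rightarrow> real) \<Rightarrow> (nat \<Rightarrow> real) \<Rightarrow> real" where
  "Mconst chi lam mu = min
     ((pos_part (chi 2 * mu 2 * lam 2 - chi 1 * mu 1 * lam 1) + chi 1 * mu 1 * pos_part (lam 1 - lam 2)) / lam 2)
     ((chi 2 * mu 2 * pos_part (lam 1 - lam 2) + pos_part (chi 2 * mu 2 * lam 2 - chi 1 * mu 1 * lam 1)) / lam 1)"

definition C0 :: "real \<Rightarrow> real \<Rightarrow> (nat \<Rightarrow> real) \<Rightarrow> (nat \<Rightarrow> real) \<Rightarrow> (nat \<Rightarrow> real) \<Rightarrow> real" where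
  "C0 a b chi lam mu = a / (b + chi 2 * mu 2 - chi 1 * mu 1 - Mconst chi lam mu)"

definition phi :: "real \<Rightarrow> real \<Rightarrow> real \<Rightarrow> real" where
  "phi a m x = exp (- sqrt a * m * x)"

definition Uplus :: "real \<Rightarrow> real \<Rightarrow> (nat \<Rightarrow> real) \<Rightarrow> (nat \<Rightarrow> real) \<Rightarrow> (nat \<Rightarrow> real) \<Rightarrow> real \<Rightarrow> real \<Rightarrow> real" where
  "Uplus a b chi lam mu m x = min (C0 a b chi lam mu) (phi a m x)"

definition Uminus :: "real \<Rightarrow> real \<Rightarrow> real \<Rightarrow> real \<Rightarrow> real \<Rightarrow> real" where
  "Uminus a d m mt x = max 0 (phi a m x - d * phi a mt x)"

definition Cb_unif :: "(real \<Rightarrow> real) set" where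
  "Cb_unif = {u. bounded (range u) \<and> uniformly_continuous_on UNIV u}"

definition Eset :: "real \<Rightarrow> real \<Rightarrow> (nat \<Rightarrow> real) \<Rightarrow> (nat \<Rightarrow> real) \<Rightarrow> (nat \<Rightarrow> real) \<Rightarrow> real \<Rightarrow> real \<Rightarrow> real \<Rightarrow> (real \<Rightarrow> real) set" where
  "Eset a b chi lam mu d m mt =
     {u \<in> Cb_unif. \<forall>x. Uminus a d m mt x \<le> u x \<and> u x \<le> Uplus a b chi lam mu m x}"

definition Vfun :: "real \<Rightarrow> real \<Rightarrow> (real \<Rightarrow> real) \<Rightarrow> real \<Rightarrow> real" where
  "Vfun lm mi u x = mi * (LINT s:{0<..}|lborel.
      (LINT z|lborel. exp (- lm * s) / sqrt (4 * pi * s) * exp (- ((x - z)\<^sup>2) / (4 * s)) * u z))"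

end

theory Submission
  imports Defs "HOL-Probability.Probability" "HOL-Real_Asymp.Real_Asymp"
begin

(*
  Integrating the heat kernel against exp (-lam s) over s > 0 gives exp (-r |y|) / (2 r), r = sqrt lam,
  so by Fubini V(x) = mu / (2 r) * int exp (-r |x - z|) u(z) dz. Split it at z = x into
  L(x) = int_{z<x} exp (-r (x - z)) u(z) dz and R(x) = int_{z>x} exp (-r (z - x)) u(z) dz;
  then L' = u - r L and R' = r R - u, hence V' = mu (R - L) / 2 and
    chi_i V_i' - chi_j V_j' = (chi_i mu_i - chi_j mu_j) (R_i - L_i) / 2
                              + chi_j mu_j ((R_i - R_j) - (L_i - L_j)) / 2.
  For u in E_mu we have 0 <= u <= min C0 (exp (-k z)) with k = sqrt a * mu. The kernels are positive
  and decrease in r, so L, R and their differences in r are controlled by the same expressions with u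
  replaced by C0 or by exp (-k z), which are explicit; elementary inequalities in r, k and
  s = sqrt (r^2 - k^2) turn these into the stated bound.
*)

lemma integrable_gaussian: "integrable lborel (\<lambda>v::real. exp (- v\<^sup>2))"
  and integral_gaussian: "(\<integral>v. exp (- v\<^sup>2) \<partial>lborel) = sqrt pi"
proof -
  have eq: "(\<lambda>v::real. exp (- v\<^sup>2)) = (\<lambda>v. sqrt pi * normal_density 0 (sqrt (1/2)) v)"
    by (auto simp: normal_density_def fun_eq_iff power_divide)
  show "integrable lborel (\<lambda>v::real. exp (- v\<^sup>2))" unfolding eq by simp
  show "(\<integral>v. exp (- v\<^sup>2) \<partial>lborel) = sqrt pi" unfolding eq by simp
qed

lemma integral_gaussian_times_root_ratio:
  fixes a b :: real assumes a: "a > 0" and b: "b > 0"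
  defines "D \<equiv> \<lambda>v. sqrt (v\<^sup>2 + 4 * a * b)"
  defines "h \<equiv> \<lambda>v. (v + D v) / (2 * a)"
  shows "integrable lborel (\<lambda>v. exp (- v\<^sup>2) * (h v / D v))"
    and "(\<integral>v. exp (- v\<^sup>2) * (h v / D v) \<partial>lborel) = sqrt pi / (2 * a)"
proof -
  have D_pos: "D v > 0" for v
    unfolding D_def using a b by (intro real_sqrt_gt_zero add_nonneg_pos) auto
  have D_ge: "\<bar>v\<bar> \<le> D v" for v
    unfolding D_def using a b by (simp add: real_le_rsqrt)
  have ratio_bounds: "0 \<le> h v / D v \<and> h v / D v \<le> 1 / a" for v
  proof -
    have "0 \<le> v + D v" "v + D v \<le> 2 * D v" using D_ge[of v] by auto
    then show ?thesis using D_pos[of v] a unfolding h_def by (auto simp: divide_simps)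
  qed
  have ratio_symm: "h v / D v + h (- v) / D (- v) = 1 / a" for v
    using D_pos[of v] a unfolding h_def D_def by (simp add: divide_simps)
  show int: "integrable lborel (\<lambda>v. exp (- v\<^sup>2) * (h v / D v))"
  proof (rule Bochner_Integration.integrable_bound[OF integrable_mult_right[OF integrable_gaussian, of "1/a"]])
    have "norm (exp (- v\<^sup>2) * (h v / D v)) \<le> norm (1 / a * exp (- v\<^sup>2))" for v
    proof -
      have "norm (exp (- v\<^sup>2) * (h v / D v)) = exp (- v\<^sup>2) * (h v / D v)"
        unfolding real_norm_def using ratio_bounds[of v] by (intro abs_of_nonneg mult_nonneg_nonneg) auto
      also have "\<dots> \<le> exp (- v\<^sup>2) * (1 / a)"
        using ratio_bounds[of v] by (intro mult_left_mono) auto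
      finally show ?thesis using a by simp
    qed
    then show "AE v in lborel. norm (exp (- v\<^sup>2) * (h v / D v)) \<le> norm (1 / a * exp (- v\<^sup>2))"
      by simp
  qed (simp_all add: h_def D_def)
  have int_refl: "integrable lborel (\<lambda>v. exp (- v\<^sup>2) * (h (- v) / D (- v)))"
    using lborel_integrable_real_affine[OF int, of "-1" 0] by simp
  have "2 * (\<integral>v. exp (- v\<^sup>2) * (h v / D v) \<partial>lborel)
      = (\<integral>v. exp (- v\<^sup>2) * (h v / D v) + exp (- v\<^sup>2) * (h (- v) / D (- v)) \<partial>lborel)"
    using int int_refl lborel_integral_real_affine[of "-1" "\<lambda>v. exp (- v\<^sup>2) * (h v / D v)" 0]
    by simp
  also have "\<dots> = (\<integral>v. 1 / a * exp (- v\<^sup>2) \<partial>lborel)"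
    unfolding distrib_left[symmetric] ratio_symm by (simp add: mult.commute)
  also have "\<dots> = sqrt pi / a"
    using integral_gaussian by simp
  finally show "(\<integral>v. exp (- v\<^sup>2) * (h v / D v) \<partial>lborel) = sqrt pi / (2 * a)"
    by simp
qed

lemma quadratic_root_substitution:
  fixes a b v :: real assumes a: "a > 0" and b: "b > 0"
  defines "D \<equiv> \<lambda>v. sqrt (v\<^sup>2 + 4 * a * b)"
  defines "h \<equiv> \<lambda>v. (v + D v) / (2 * a)"
  shows "h v > 0"
    and "a\<^sup>2 * (h v)\<^sup>2 + b\<^sup>2 / (h v)\<^sup>2 = v\<^sup>2 + 2 * a * b"
    and "((\<lambda>v. (h v)\<^sup>2) has_real_derivative 2 * (h v)\<^sup>2 / D v) (at v)"
    and "((\<lambda>v. (h v)\<^sup>2) \<longlongrightarrow> 0) at_bot"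
    and "filterlim (\<lambda>v. (h v)\<^sup>2) at_top at_top"
proof -
  have D_pos: "D v > 0"
    unfolding D_def using a b by (intro real_sqrt_gt_zero add_nonneg_pos) auto
  have D_sq: "(D v)\<^sup>2 = v\<^sup>2 + 4 * a * b"
    unfolding D_def using a b by simp
  have "\<bar>v\<bar> < D v"
    unfolding D_def using a b by (simp add: real_less_rsqrt)
  then show h_pos: "h v > 0"
    unfolding h_def using a by (auto intro!: divide_pos_pos)
  have "4 * a * (a * (h v)\<^sup>2) = (v + D v)\<^sup>2"
    unfolding h_def using a by (simp add: power_divide field_simps power2_eq_square)
  also have "\<dots> = 4 * a * (v * h v + b)"
    unfolding power2_sum D_sq h_def using a by (simp add: field_simps power2_eq_square)
  finally have "a * (h v)\<^sup>2 = v * h v + b"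
    using a by simp
  then have "a * h v - b / h v = v"
    using h_pos by (simp add: field_simps power2_eq_square)
  then have "(a * h v - b / h v)\<^sup>2 = v\<^sup>2" by simp
  then show "a\<^sup>2 * (h v)\<^sup>2 + b\<^sup>2 / (h v)\<^sup>2 = v\<^sup>2 + 2 * a * b"
    using h_pos by (simp add: power2_diff power_mult_distrib power_divide field_simps)
      (simp add: power2_eq_square)
  have "(h has_real_derivative (1 + v / D v) / (2 * a)) (at v)"
    unfolding h_def D_def using D_pos a unfolding D_def
    by (auto intro!: derivative_eq_intros simp: power2_eq_square field_simps)
  then have "((\<lambda>v. (h v)\<^sup>2) has_real_derivative 2 * h v * ((1 + v / D v) / (2 * a))) (at v)"
    by (auto intro!: derivative_eq_intros)
  moreover have "2 * h v * ((1 + v / D v) / (2 * a)) = 2 * (h v)\<^sup>2 / D v"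
    unfolding h_def using D_pos a by (simp add: field_simps power2_eq_square)
  ultimately show "((\<lambda>v. (h v)\<^sup>2) has_real_derivative 2 * (h v)\<^sup>2 / D v) (at v)"
    by simp
  show "((\<lambda>v. (h v)\<^sup>2) \<longlongrightarrow> 0) at_bot" "filterlim (\<lambda>v. (h v)\<^sup>2) at_top at_top"
    unfolding h_def D_def using a b by real_asymp+
qed

lemma set_integral_Ioi_substitution:
  fixes F g g' :: "real \<Rightarrow> real"
  assumes g_deriv: "\<And>v. (g has_real_derivative g' v) (at v)" and g_pos: "\<And>v. g v > 0"
    and F_cont: "\<And>v. isCont F (g v)" and g'_cont: "\<And>v. isCont g' v"
    and F_nonneg: "\<And>s. s > 0 \<Longrightarrow> 0 \<le> F s" and g'_nonneg: "\<And>v. 0 \<le> g' v"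
    and g_bot: "(g \<longlongrightarrow> 0) at_bot" and g_top: "filterlim g at_top at_top"
    and integrable: "integrable lborel (\<lambda>v. F (g v) * g' v)"
  shows "set_integrable lborel {0<..} F"
    and "(LINT s:{0<..}|lborel. F s) = (\<integral>v. F (g v) * g' v \<partial>lborel)"
proof -
  have bot: "((ereal \<circ> g \<circ> real_of_ereal) \<longlongrightarrow> ereal 0) (at_right (-\<infinity>))"
    using g_bot by (simp add: ereal_tendsto_simps1 ereal_tendsto_simps2 comp_assoc)
  have "((ereal \<circ> g) \<longlongrightarrow> \<infinity>) at_top"
    using g_top ereal_tendsto_simps2(2) by blast
  then have top: "((ereal \<circ> g \<circ> real_of_ereal) \<longlongrightarrow> \<infinity>) (at_left \<infinity>)"
    by (subst ereal_tendsto_simps1(3))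
  have "set_integrable lborel (einterval (-\<infinity>) \<infinity>) (\<lambda>v. F (g v) * g' v)"
    using integrable by (simp add: set_integrable_def)
  note change_of_variables = interval_integral_substitution_nonneg[of "-\<infinity>" "\<infinity>" g g' F "ereal 0" "\<infinity>",
      OF _ g_deriv F_cont g'_cont F_nonneg[OF g_pos] g'_nonneg bot top this]
  have Ioi: "einterval 0 \<infinity> = {0::real<..}" by (auto simp: einterval_iff)
  show "set_integrable lborel {0<..} F"
    using change_of_variables(1) by (simp add: Ioi)
  have "(LINT s:{0<..}|lborel. F s) = (LBINT v=-\<infinity>..\<infinity>. F (g v) * g' v)"
    using change_of_variables(2) by (simp add: interval_integral_to_infinity_eq)
  also have "\<dots> = (\<integral>v. F (g v) * g' v \<partial>lborel)"
    by (simp add: interval_lebesgue_integral_def set_lebesgue_integral_def)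
  finally show "(LINT s:{0<..}|lborel. F s) = (\<integral>v. F (g v) * g' v \<partial>lborel)" .
qed

(* Substituting s = h(v)^2 turns the exponent -lam s - y^2 / (4 s) into -v^2 - sqrt lam * |y|. *)
lemma heat_kernel_laplace_transform:
  fixes lam y :: real assumes lam: "lam > 0" and y: "y \<noteq> 0"
  defines "F \<equiv> \<lambda>s. exp (- lam * s) / sqrt (4 * pi * s) * exp (- (y\<^sup>2) / (4 * s))"
  shows "set_integrable lborel {0<..} F"
    and "(LINT s:{0<..}|lborel. F s) = exp (- sqrt lam * \<bar>y\<bar>) / (2 * sqrt lam)"
proof -
  define a where "a = sqrt lam"
  define b where "b = \<bar>y\<bar> / 2"
  have a: "a > 0" and b: "b > 0" using lam y by (auto simp: a_def b_def)
  define D where "D = (\<lambda>v. sqrt (v\<^sup>2 + 4 * a * b))"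
  define h where "h = (\<lambda>v. (v + D v) / (2 * a))"
  define g where "g = (\<lambda>v. (h v)\<^sup>2)"
  define g' where "g' = (\<lambda>v. 2 * (h v)\<^sup>2 / D v)"
  note substitution = quadratic_root_substitution[OF a b]
  have D_pos: "D v > 0" for v
    unfolding D_def using a b by (intro real_sqrt_gt_zero add_nonneg_pos) auto
  have h_pos: "h v > 0" and g_deriv: "(g has_real_derivative g' v) (at v)" for v
    using substitution(1,3) unfolding g_def g'_def h_def D_def by auto
  have g_bot: "(g \<longlongrightarrow> 0) at_bot" and g_top: "filterlim g at_top at_top"
    using substitution(4,5) unfolding g_def h_def D_def by auto
  have subst_integrand: "F (g v) * g' v = exp (- (2 * a * b)) / sqrt pi * (exp (- v\<^sup>2) * (h v / D v))" for v
  proof -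
    have "sqrt (4 * pi * (h v)\<^sup>2) = 2 * sqrt pi * h v"
      using h_pos[of v] by (simp add: real_sqrt_mult)
    then have "F (g v) * g' v = exp (- lam * (h v)\<^sup>2 + - (y\<^sup>2) / (4 * (h v)\<^sup>2)) * h v / (sqrt pi * D v)"
      unfolding F_def g_def g'_def exp_add using h_pos[of v] D_pos[of v]
      by (simp add: field_simps power2_eq_square)
    also have "- lam * (h v)\<^sup>2 + - (y\<^sup>2) / (4 * (h v)\<^sup>2) = - (a\<^sup>2 * (h v)\<^sup>2 + b\<^sup>2 / (h v)\<^sup>2)"
      using lam by (simp add: a_def b_def power_divide power2_abs)
    also have "exp (- (a\<^sup>2 * (h v)\<^sup>2 + b\<^sup>2 / (h v)\<^sup>2)) = exp (- (2 * a * b)) * exp (- v\<^sup>2)"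
      using substitution(2)[of v] unfolding h_def D_def by (simp flip: exp_add)
    finally show ?thesis by simp
  qed
  have weighted_gaussian: "integrable lborel (\<lambda>v. exp (- v\<^sup>2) * (h v / D v))"
    "(\<integral>v. exp (- v\<^sup>2) * (h v / D v) \<partial>lborel) = sqrt pi / (2 * a)"
    using integral_gaussian_times_root_ratio[OF a b] unfolding h_def D_def by auto
  have integrable: "integrable lborel (\<lambda>v. F (g v) * g' v)"
    unfolding subst_integrand by (intro integrable_mult_right weighted_gaussian(1))
  have F_cont: "isCont F (g v)" and g'_cont: "isCont g' v" and g'_nonneg: "0 \<le> g' v" and g_pos: "g v > 0" for v
    unfolding F_def g_def g'_def h_def D_def using D_pos[of v] h_pos[of v] a
    unfolding D_def h_def by (auto intro!: continuous_intros)
  have F_nonneg: "0 \<le> F s" if "s > 0" for s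
    unfolding F_def using that by simp
  note change_of_variables = set_integral_Ioi_substitution[OF g_deriv g_pos F_cont g'_cont F_nonneg g'_nonneg
      g_bot g_top integrable]
  show "set_integrable lborel {0<..} F"
    by (rule change_of_variables(1))
  have "(LINT s:{0<..}|lborel. F s) = (\<integral>v. F (g v) * g' v \<partial>lborel)"
    by (rule change_of_variables(2))
  also have "\<dots> = exp (- (2 * a * b)) / sqrt pi * (sqrt pi / (2 * a))"
    unfolding subst_integrand by (subst integral_mult_right_zero) (simp only: weighted_gaussian(2))
  also have "\<dots> = exp (- sqrt lam * \<bar>y\<bar>) / (2 * sqrt lam)"
    unfolding a_def b_def by simp
  finally show "(LINT s:{0<..}|lborel. F s) = exp (- sqrt lam * \<bar>y\<bar>) / (2 * sqrt lam)" .
qed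

lemma set_integral_exp_Iio:
  fixes r c :: real assumes r: "r > 0"
  shows "set_integrable lborel {..<c} (\<lambda>z. exp (r * z))"
    and "(LINT z:{..<c}|lborel. exp (r * z)) = exp (r * c) / r"
proof -
  let ?F = "\<lambda>z. exp (r * z) / r"
  have deriv: "DERIV ?F z :> exp (r * z)" for z
    using r by (auto intro!: derivative_eq_intros)
  have at_c: "((?F \<circ> real_of_ereal) \<longlongrightarrow> exp (r * c) / r) (at_left (ereal c))"
    unfolding ereal_tendsto_simps1 using r
    by (intro tendsto_intros continuous_on_imp_continuous_within) auto
  have at_bot: "((?F \<circ> real_of_ereal) \<longlongrightarrow> 0) (at_right (-\<infinity>))"
    unfolding ereal_tendsto_simps1 using r by real_asymp
  note ftc = interval_integral_FTC_nonneg[of "-\<infinity>" "ereal c" ?F "\<lambda>z. exp (r * z)",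
      OF _ deriv _ _ at_bot at_c]
  have Iio: "einterval (-\<infinity>) (ereal c) = {..<c}" by (auto simp: einterval_iff)
  show "set_integrable lborel {..<c} (\<lambda>z. exp (r * z))"
    using ftc(1) by (simp add: Iio)
  show "(LINT z:{..<c}|lborel. exp (r * z)) = exp (r * c) / r"
    using ftc(2) by (simp add: interval_lebesgue_integral_def Iio)
qed

lemma indicator_Iio_uminus: "indicator {..<- c} z = indicator {c<..} (- z :: real)"
  by (simp add: indicator_def)

lemma set_integrable_reflect:
  fixes f :: "real \<Rightarrow> real"
  shows "set_integrable lborel {..<- c} (\<lambda>z. f (- z)) \<longleftrightarrow> set_integrable lborel {c<..} f"
  using lborel_integrable_real_affine_iff[of "-1" "\<lambda>z. indicator {c<..} z *\<^sub>R f z" 0]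
  unfolding set_integrable_def indicator_Iio_uminus by simp

lemma set_integral_reflect:
  fixes f :: "real \<Rightarrow> real"
  shows "(LINT z:{..<- c}|lborel. f (- z)) = (LINT z:{c<..}|lborel. f z)"
  using lborel_integral_real_affine[of "-1" "\<lambda>z. indicator {c<..} z *\<^sub>R f z" 0]
  unfolding set_lebesgue_integral_def indicator_Iio_uminus by simp

lemma set_integral_weighted_mono:
  fixes A :: "real set" and K u w :: "real \<Rightarrow> real"
  assumes [measurable]: "A \<in> sets borel" "K \<in> borel_measurable borel" "u \<in> borel_measurable borel"
    and Kw: "set_integrable lborel A (\<lambda>z. K z * w z)"
    and K_nonneg: "\<And>z. z \<in> A \<Longrightarrow> 0 \<le> K z"
    and u_between: "\<And>z. z \<in> A \<Longrightarrow> 0 \<le> u z \<and> u z \<le> w z"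
  shows "set_integrable lborel A (\<lambda>z. K z * u z)"
    and "0 \<le> (LINT z:A|lborel. K z * u z)"
    and "(LINT z:A|lborel. K z * u z) \<le> (LINT z:A|lborel. K z * w z)"
proof -
  have Ku_le: "K z * u z \<le> K z * w z" if "z \<in> A" for z
    using K_nonneg[OF that] u_between[OF that] by (intro mult_left_mono) auto
  show Ku: "set_integrable lborel A (\<lambda>z. K z * u z)"
  proof (rule set_integrable_bound[OF Kw])
    show "set_borel_measurable lborel A (\<lambda>z. K z * u z)"
      unfolding set_borel_measurable_def by measurable
    have "norm (K z * u z) \<le> norm (K z * w z)" if "z \<in> A" for z
      using K_nonneg[OF that] u_between[OF that] Ku_le[OF that] by simp
    then show "AE z in lborel. z \<in> A \<longrightarrow> norm (K z * u z) \<le> norm (K z * w z)"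
      by simp
  qed
  show "0 \<le> (LINT z:A|lborel. K z * u z)"
    unfolding set_lebesgue_integral_def
    by (intro Bochner_Integration.integral_nonneg) (simp add: indicator_def K_nonneg u_between)
  show "(LINT z:A|lborel. K z * u z) \<le> (LINT z:A|lborel. K z * w z)"
    using Ku Kw Ku_le by (rule set_integral_mono)
qed

(* The right-sided convolution int_{z>x} exp (-r (z - x)) u(z) dz is left_exp_conv r (\<lambda>z. u (- z)) (- x). *)
definition left_exp_conv :: "real \<Rightarrow> (real \<Rightarrow> real) \<Rightarrow> real \<Rightarrow> real" where
  "left_exp_conv r u x = (LINT z:{..<x}|lborel. exp (- r * (x - z)) * u z)"

lemma left_exp_conv_exp:
  fixes r k x :: real assumes "k < r"
  shows "set_integrable lborel {..<x} (\<lambda>z. exp (- r * (x - z)) * exp (- k * z))"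
    and "left_exp_conv r (\<lambda>z. exp (- k * z)) x = exp (- k * x) / (r - k)"
proof -
  have rk: "r - k > 0" using assms by simp
  have factor: "(\<lambda>z. exp (- r * (x - z)) * exp (- k * z)) = (\<lambda>z. exp (- r * x) * exp ((r - k) * z))"
    by (auto simp: fun_eq_iff mult_exp_exp algebra_simps)
  show "set_integrable lborel {..<x} (\<lambda>z. exp (- r * (x - z)) * exp (- k * z))"
    unfolding factor using set_integral_exp_Iio(1)[OF rk] by simp
  show "left_exp_conv r (\<lambda>z. exp (- k * z)) x = exp (- k * x) / (r - k)"
    unfolding left_exp_conv_def factor set_integral_mult_right set_integral_exp_Iio(2)[OF rk]
    by (simp add: mult_exp_exp algebra_simps)
qed

lemma set_integrable_left_exp_conv:
  fixes r k c x :: real and u :: "real \<Rightarrow> real"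
  assumes "k < r" and [measurable]: "u \<in> borel_measurable borel"
    and u_bound: "\<And>z. \<bar>u z\<bar> \<le> c * exp (- k * z)"
  shows "set_integrable lborel {..<x} (\<lambda>z. exp (- r * (x - z)) * u z)"
proof (rule set_integrable_bound[OF set_integrable_mult_right[OF left_exp_conv_exp(1)[OF assms(1), of x], of c]])
  show "set_borel_measurable lborel {..<x} (\<lambda>z. exp (- r * (x - z)) * u z)"
    unfolding set_borel_measurable_def by measurable
  show "AE z in lborel. z \<in> {..<x} \<longrightarrow>
      norm (exp (- r * (x - z)) * u z) \<le> norm (c * (exp (- r * (x - z)) * exp (- k * z)))"
  proof (intro AE_I2 impI)
    fix z
    have "\<bar>u z\<bar> \<le> \<bar>c\<bar> * exp (- k * z)"
      using u_bound[of z] abs_ge_self[of c] by (meson exp_ge_zero mult_right_mono order_trans)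
    then show "norm (exp (- r * (x - z)) * u z) \<le> norm (c * (exp (- r * (x - z)) * exp (- k * z)))"
      by (simp add: abs_mult mult.left_commute)
  qed
qed

lemma left_exp_conv_bounds:
  fixes r k c x :: real and u :: "real \<Rightarrow> real"
  assumes "k < r" and [measurable]: "u \<in> borel_measurable borel"
    and u_between: "\<And>z. 0 \<le> u z \<and> u z \<le> c * exp (- k * z)"
  shows "0 \<le> left_exp_conv r u x" and "left_exp_conv r u x \<le> c * exp (- k * x) / (r - k)"
proof -
  have "set_integrable lborel {..<x} (\<lambda>z. exp (- r * (x - z)) * (c * exp (- k * z)))"
    using set_integrable_mult_right[OF left_exp_conv_exp(1)[OF assms(1), of x], of c]
    by (simp add: mult.left_commute)
  note kernel_mono = set_integral_weighted_mono[OF _ _ _ this]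
  show "0 \<le> left_exp_conv r u x"
    using kernel_mono u_between unfolding left_exp_conv_def by (simp add: mult.left_commute)
  have "(LINT z:{..<x}|lborel. exp (- r * (x - z)) * (c * exp (- k * z))) = c * exp (- k * x) / (r - k)"
    using left_exp_conv_exp(2)[OF assms(1), of x] unfolding left_exp_conv_def by (simp add: mult.left_commute)
  then show "left_exp_conv r u x \<le> c * exp (- k * x) / (r - k)"
    using kernel_mono u_between unfolding left_exp_conv_def by (simp add: mult.left_commute)
qed

lemma left_exp_conv_diff_bounds:
  fixes r1 r2 k c x :: real and u :: "real \<Rightarrow> real"
  assumes k_r1: "k < r1" and r1_r2: "r1 \<le> r2" and [measurable]: "u \<in> borel_measurable borel"
    and u_between: "\<And>z. 0 \<le> u z \<and> u z \<le> c * exp (- k * z)"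
  shows "0 \<le> left_exp_conv r1 u x - left_exp_conv r2 u x"
    and "left_exp_conv r1 u x - left_exp_conv r2 u x
           \<le> c * exp (- k * x) * (1 / (r1 - k) - 1 / (r2 - k))"
proof -
  have k_r2: "k < r2" using k_r1 r1_r2 by simp
  define K where "K = (\<lambda>z. exp (- r1 * (x - z)) - exp (- r2 * (x - z)))"
  have K_meas: "K \<in> borel_measurable borel" unfolding K_def by measurable
  have K_nonneg: "0 \<le> K z" if "z \<in> {..<x}" for z
    using that r1_r2 unfolding K_def by (auto intro!: mult_right_mono)
  have u_bound: "\<bar>u z\<bar> \<le> c * exp (- k * z)" for z
    using u_between[of z] by simp
  have diff: "left_exp_conv r1 u x - left_exp_conv r2 u x = (LINT z:{..<x}|lborel. K z * u z)"
    using set_integral_diff(2)[OF set_integrable_left_exp_conv[OF k_r1 _ u_bound]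
        set_integrable_left_exp_conv[OF k_r2 _ u_bound]]
    unfolding left_exp_conv_def K_def left_diff_distrib by simp
  note e1 = left_exp_conv_exp[OF k_r1, of x] and e2 = left_exp_conv_exp[OF k_r2, of x]
  have split: "(\<lambda>z. K z * (c * exp (- k * z)))
      = (\<lambda>z. c * (exp (- r1 * (x - z)) * exp (- k * z)) - c * (exp (- r2 * (x - z)) * exp (- k * z)))"
    unfolding K_def by (auto simp: fun_eq_iff algebra_simps)
  have Kw: "set_integrable lborel {..<x} (\<lambda>z. K z * (c * exp (- k * z)))"
    unfolding split by (intro set_integral_diff(1) set_integrable_mult_right e1(1) e2(1))
  have Kw_integral: "(LINT z:{..<x}|lborel. K z * (c * exp (- k * z)))
      = c * exp (- k * x) * (1 / (r1 - k) - 1 / (r2 - k))"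
    unfolding split set_integral_diff(2)[OF set_integrable_mult_right[OF e1(1)] set_integrable_mult_right[OF e2(1)]]
      set_integral_mult_right
    using e1(2) e2(2) unfolding left_exp_conv_def by (simp add: algebra_simps)
  note kernel_mono = set_integral_weighted_mono[OF _ K_meas _ Kw K_nonneg u_between]
  show "0 \<le> left_exp_conv r1 u x - left_exp_conv r2 u x"
    using kernel_mono diff by simp
  show "left_exp_conv r1 u x - left_exp_conv r2 u x \<le> c * exp (- k * x) * (1 / (r1 - k) - 1 / (r2 - k))"
    using kernel_mono diff Kw_integral by simp
qed

lemma has_real_derivative_set_integral_Iio:
  fixes g :: "real \<Rightarrow> real" and x :: real
  assumes cont: "continuous_on UNIV g" and int: "\<And>c. set_integrable lborel {..<c} g"
  shows "((\<lambda>y. LINT z:{..<y}|lborel. g z) has_real_derivative g x) (at x)"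
proof -
  have Iio: "einterval (-\<infinity>) (ereal c) = {..<c}" for c by (auto simp: einterval_iff)
  have split: "(LINT z:{..<y}|lborel. g z) = (LINT z:{..<0}|lborel. g z) + (LBINT z=ereal 0..ereal y. g z)" for y
  proof -
    have bounds: "min (-\<infinity>) (min (ereal 0) (ereal y)) = -\<infinity>"
      "max (-\<infinity>) (max (ereal 0) (ereal y)) = ereal (max 0 y)"
      by (simp_all add: max_def)
    have "interval_lebesgue_integrable lborel (-\<infinity>) (ereal (max 0 y)) g"
      using int[of "max 0 y"] unfolding interval_lebesgue_integrable_def Iio by simp
    then have "interval_lebesgue_integrable lborel (min (-\<infinity>) (min (ereal 0) (ereal y)))
        (max (-\<infinity>) (max (ereal 0) (ereal y))) g"
      unfolding bounds .
    from interval_integral_sum[OF this]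
    have "(LBINT z=-\<infinity>..ereal 0. g z) + (LBINT z=ereal 0..ereal y. g z) = (LBINT z=-\<infinity>..ereal y. g z)" .
    moreover have "(LBINT z=-\<infinity>..ereal c. g z) = (LINT z:{..<c}|lborel. g z)" for c
      by (subst interval_lebesgue_integral_le_eq) (simp_all add: Iio)
    ultimately show ?thesis by simp
  qed
  have "((\<lambda>y. LBINT z=ereal 0..ereal y. g z) has_vector_derivative g x) (at x within {min 0 x - 1..max 0 x + 1})"
    by (rule interval_integral_FTC2) (auto intro: continuous_on_subset[OF cont])
  moreover have "at x within {min 0 x - 1..max 0 x + 1} = at x"
    by (rule at_within_Icc_at) auto
  ultimately have "((\<lambda>y. LBINT z=ereal 0..ereal y. g z) has_real_derivative g x) (at x)"
    by (simp add: has_real_derivative_iff_has_vector_derivative)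
  then have "((\<lambda>y. (LINT z:{..<0}|lborel. g z) + (LBINT z=ereal 0..ereal y. g z)) has_real_derivative 0 + g x) (at x)"
    by (rule DERIV_add[OF DERIV_const])
  then show ?thesis
    by (subst ext[OF split]) simp
qed

lemma left_exp_conv_has_derivative:
  fixes r B x :: real and u :: "real \<Rightarrow> real"
  assumes r: "r > 0" and cont: "continuous_on UNIV u" and bound: "\<And>z. \<bar>u z\<bar> \<le> B"
  shows "(left_exp_conv r u has_real_derivative u x - r * left_exp_conv r u x) (at x)"
proof -
  have [measurable]: "u \<in> borel_measurable borel"
    using cont by (rule borel_measurable_continuous_onI)
  define P where "P = (\<lambda>y. LINT z:{..<y}|lborel. exp (r * z) * u z)"
  have conv_eq: "left_exp_conv r u = (\<lambda>y. exp (- r * y) * P y)"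
  proof
    fix y
    have "left_exp_conv r u y = (LINT z:{..<y}|lborel. exp (- r * y) * (exp (r * z) * u z))"
      unfolding left_exp_conv_def
      by (rule set_lebesgue_integral_cong) (auto simp: mult_exp_exp algebra_simps)
    then show "left_exp_conv r u y = exp (- r * y) * P y"
      unfolding P_def by simp
  qed
  have "set_integrable lborel {..<c} (\<lambda>z. exp (r * z) * u z)" for c
  proof (rule set_integrable_bound[OF set_integrable_mult_right[OF set_integral_exp_Iio(1)[OF r, of c], of B]])
    show "set_borel_measurable lborel {..<c} (\<lambda>z. exp (r * z) * u z)"
      unfolding set_borel_measurable_def by measurable
    show "AE z in lborel. z \<in> {..<c} \<longrightarrow> norm (exp (r * z) * u z) \<le> norm (B * exp (r * z))"
      using bound by (intro AE_I2) (auto simp: abs_mult mult.commute intro: mult_right_mono order.trans[OF _ abs_ge_self])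
  qed
  then have "(P has_real_derivative exp (r * x) * u x) (at x)"
    unfolding P_def using cont by (intro has_real_derivative_set_integral_Iio continuous_intros)
  then have "((\<lambda>y. exp (- r * y) * P y) has_real_derivative
      exp (- r * x) * - r * P x + exp (- r * x) * (exp (r * x) * u x)) (at x)"
    by (auto intro!: derivative_eq_intros)
  also have "exp (- r * x) * - r * P x + exp (- r * x) * (exp (r * x) * u x)
      = u x - r * (exp (- r * x) * P x)"
    by (simp add: mult_exp_exp algebra_simps)
  finally show ?thesis
    unfolding conv_eq .
qed

lemma integral_exp_abs_eq_left_exp_convs:
  fixes r B x :: real and u :: "real \<Rightarrow> real"
  assumes r: "r > 0" and [measurable]: "u \<in> borel_measurable borel" and bound: "\<And>z. \<bar>u z\<bar> \<le> B"
  shows "(\<integral>z. exp (- r * \<bar>x - z\<bar>) * u z \<partial>lborel)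
           = left_exp_conv r u x + left_exp_conv r (\<lambda>z. u (- z)) (- x)"
proof -
  let ?f = "\<lambda>z. exp (- r * \<bar>x - z\<bar>) * u z"
  have bound_exp: "\<bar>u z\<bar> \<le> B * exp (- 0 * z)" "\<bar>u (- z)\<bar> \<le> B * exp (- 0 * z)" for z
    using bound by simp_all
  have left_cong: "set_integrable lborel {..<x} ?f = set_integrable lborel {..<x} (\<lambda>z. exp (- r * (x - z)) * u z)"
      "(LINT z:{..<x}|lborel. ?f z) = left_exp_conv r u x"
    unfolding left_exp_conv_def
    by (rule set_integrable_cong set_lebesgue_integral_cong; simp)+
  have right_cong: "set_integrable lborel {x<..} ?f = set_integrable lborel {x<..} (\<lambda>z. exp (- r * (z - x)) * u z)"
      "(LINT z:{x<..}|lborel. ?f z) = (LINT z:{x<..}|lborel. exp (- r * (z - x)) * u z)"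
    by (rule set_integrable_cong set_lebesgue_integral_cong; simp)+
  have left: "set_integrable lborel {..<x} ?f"
    unfolding left_cong by (rule set_integrable_left_exp_conv[OF r _ bound_exp(1)]) measurable
  have "set_integrable lborel {..<- x} (\<lambda>z. exp (- r * (- x - z)) * u (- z))"
    by (rule set_integrable_left_exp_conv[OF r _ bound_exp(2)]) measurable
  then have "set_integrable lborel {x<..} (\<lambda>z. exp (- r * (z - x)) * u z)"
    using set_integrable_reflect[where f = "\<lambda>z. exp (- r * (z - x)) * u z" and c = x] by (simp add: algebra_simps)
  then have right: "set_integrable lborel {x<..} ?f"
    unfolding right_cong(1) .
  have "(\<integral>z. ?f z \<partial>lborel) = (LINT z:{..<x} \<union> {x<..}|lborel. ?f z)"
  proof -
    have "(LINT z:{..<x} \<union> {x<..}|lborel. ?f z) = (LINT z:UNIV|lborel. ?f z)"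
      by (rule set_integral_cong_set) (auto simp: set_borel_measurable_def intro: AE_I[of _ _ "{x}"])
    then show ?thesis by (simp add: set_lebesgue_integral_def)
  qed
  also have "\<dots> = (LINT z:{..<x}|lborel. ?f z) + (LINT z:{x<..}|lborel. ?f z)"
    by (rule set_integral_Un_AE[OF _ _ _ left right]) auto
  also have "(LINT z:{x<..}|lborel. ?f z) = left_exp_conv r (\<lambda>z. u (- z)) (- x)"
    unfolding right_cong(2) left_exp_conv_def
    using set_integral_reflect[where f = "\<lambda>z. exp (- r * (z - x)) * u z" and c = x] by (simp add: algebra_simps)
  finally show ?thesis
    unfolding left_cong .
qed

lemma heat_kernel_convolution_integrable:
  fixes s x B :: real and u :: "real \<Rightarrow> real"
  assumes s: "s > 0" and [measurable]: "u \<in> borel_measurable borel" and bound: "\<And>z. \<bar>u z\<bar> \<le> B"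
  defines "G \<equiv> \<lambda>z. 1 / sqrt (4 * pi * s) * exp (- ((x - z)\<^sup>2) / (4 * s)) * u z"
  shows "integrable lborel G" and "(\<integral>z. \<bar>G z\<bar> \<partial>lborel) \<le> B"
proof -
  define N where "N = normal_density x (sqrt (2 * s))"
  have G_eq: "G = (\<lambda>z. N z * u z)"
    unfolding G_def N_def normal_density_def using s by (auto simp: fun_eq_iff power2_commute[of x])
  have N_int: "integrable lborel (\<lambda>z. N z * B)"
    unfolding N_def using s by simp
  have "norm (N z * u z) \<le> norm (N z * B)" for z
    using mult_left_mono[OF order.trans[OF bound abs_ge_self] normal_density_nonneg[of x "sqrt (2 * s)" z]]
    unfolding N_def by (simp add: abs_mult)
  then show G_int: "integrable lborel G"
    unfolding G_eq N_def by (intro Bochner_Integration.integrable_bound[OF N_int[unfolded N_def]] AE_I2) simp_all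
  have "(\<integral>z. \<bar>G z\<bar> \<partial>lborel) \<le> (\<integral>z. N z * B \<partial>lborel)"
    using integrable_abs[OF G_int] N_int bound
    unfolding G_eq N_def by (intro integral_mono) (auto simp: abs_mult intro!: mult_left_mono)
  also have "\<dots> = B"
    unfolding N_def using s by simp
  finally show "(\<integral>z. \<bar>G z\<bar> \<partial>lborel) \<le> B" .
qed

lemma integrable_heat_kernel_resolvent_integrand:
  fixes lm B x :: real and u :: "real \<Rightarrow> real"
  assumes lm: "lm > 0" and [measurable]: "u \<in> borel_measurable borel" and bound: "\<And>z. \<bar>u z\<bar> \<le> B"
  defines "f \<equiv> \<lambda>s z. indicator {0<..} s *
      (exp (- lm * s) / sqrt (4 * pi * s) * exp (- ((x - z)\<^sup>2) / (4 * s)) * u z)"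
  shows "integrable (lborel \<Otimes>\<^sub>M lborel) (\<lambda>(s, z). f s z)"
proof (rule lborel_pair.Fubini_integrable)
  have B: "0 \<le> B" using bound[of 0] by simp
  define G where "G = (\<lambda>s z. 1 / sqrt (4 * pi * s) * exp (- ((x - z)\<^sup>2) / (4 * s)) * u z)"
  have G_int: "integrable lborel (G s)" and G_norm: "(\<integral>z. \<bar>G s z\<bar> \<partial>lborel) \<le> B" if "s > 0" for s
    using heat_kernel_convolution_integrable[OF that _ bound] unfolding G_def by auto
  have f_eq: "f s = (\<lambda>z. exp (- lm * s) * G s z)" if "s > 0" for s
    using that unfolding f_def G_def by (auto simp: fun_eq_iff)
  show "(\<lambda>(s, z). f s z) \<in> borel_measurable (lborel \<Otimes>\<^sub>M lborel)"
    unfolding f_def by measurable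
  have norm_bound: "norm (\<integral>z. norm (f s z) \<partial>lborel) \<le> norm (B * (indicator {0<..} s * exp (- lm * s)))" for s
  proof (cases "s > 0")
    case True
    then show ?thesis
      using G_norm[OF True] B by (simp add: f_eq abs_mult)
  qed (simp add: f_def)
  have "set_integrable lborel {0<..} (\<lambda>s. exp (- lm * s))"
    using set_integral_exp_Iio(1)[OF lm, of 0] set_integrable_reflect[where c = 0 and f = "\<lambda>s. exp (- lm * s)"]
    by simp
  then have "integrable lborel (\<lambda>s. B * (indicator {0<..} s * exp (- lm * s)))"
    unfolding set_integrable_def by (intro integrable_mult_right) simp
  then show "integrable lborel (\<lambda>s. \<integral>z. norm (case (s, z) of (s, z) \<Rightarrow> f s z) \<partial>lborel)"
  proof (rule Bochner_Integration.integrable_bound)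
    show "AE s in lborel. norm (\<integral>z. norm (case (s, z) of (s, z) \<Rightarrow> f s z) \<partial>lborel)
        \<le> norm (B * (indicator {0<..} s * exp (- lm * s)))"
      using norm_bound by simp
  qed (simp add: f_def)
  have "integrable lborel (f s)" for s
  proof (cases "s > 0")
    case True
    then show ?thesis using G_int[OF True] by (simp add: f_eq)
  qed (simp add: f_def)
  then show "AE s in lborel. integrable lborel (\<lambda>z. case (s, z) of (s, z) \<Rightarrow> f s z)"
    by simp
qed

lemma Vfun_eq_integral_exp_abs:
  fixes lm mi B x :: real and u :: "real \<Rightarrow> real"
  assumes lm: "lm > 0" and [measurable]: "u \<in> borel_measurable borel" and bound: "\<And>z. \<bar>u z\<bar> \<le> B"
  shows "Vfun lm mi u x = mi / (2 * sqrt lm) * (\<integral>z. exp (- sqrt lm * \<bar>x - z\<bar>) * u z \<partial>lborel)"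
proof -
  define f where "f = (\<lambda>s z. indicator {0<..} s *
      (exp (- lm * s) / sqrt (4 * pi * s) * exp (- ((x - z)\<^sup>2) / (4 * s)) * u z))"
  have f_int: "integrable (lborel \<Otimes>\<^sub>M lborel) (\<lambda>(s, z). f s z)"
    unfolding f_def by (rule integrable_heat_kernel_resolvent_integrand[OF lm _ bound]) simp
  have [measurable]: "(\<lambda>(s, z). f s z) \<in> borel_measurable (lborel \<Otimes>\<^sub>M lborel)"
    unfolding f_def by measurable
  have "Vfun lm mi u x = mi * (\<integral>s. (\<integral>z. f s z \<partial>lborel) \<partial>lborel)"
    unfolding Vfun_def set_lebesgue_integral_def f_def by simp
  also have "(\<integral>s. (\<integral>z. f s z \<partial>lborel) \<partial>lborel) = (\<integral>z. (\<integral>s. f s z \<partial>lborel) \<partial>lborel)"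
    using lborel_pair.Fubini_integral[OF f_int] by simp
  also have "\<dots> = (\<integral>z. exp (- sqrt lm * \<bar>x - z\<bar>) * u z / (2 * sqrt lm) \<partial>lborel)"
  proof (rule integral_cong_AE)
    show "AE z in lborel. (\<integral>s. f s z \<partial>lborel) = exp (- sqrt lm * \<bar>x - z\<bar>) * u z / (2 * sqrt lm)"
      using AE_lborel_singleton[of x]
    proof eventually_elim
      case (elim z)
      then have "x - z \<noteq> 0" by simp
      note laplace = heat_kernel_laplace_transform[OF lm this]
      have "(\<integral>s. f s z \<partial>lborel) = (\<integral>s. indicator {0<..} s *
          (exp (- lm * s) / sqrt (4 * pi * s) * exp (- ((x - z)\<^sup>2) / (4 * s))) * u z \<partial>lborel)"
        unfolding f_def by (simp add: mult.assoc)
      also have "\<dots> = (LINT s:{0<..}|lborel.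
          exp (- lm * s) / sqrt (4 * pi * s) * exp (- ((x - z)\<^sup>2) / (4 * s))) * u z"
        unfolding set_lebesgue_integral_def by (simp only: real_scaleR_def integral_mult_left_zero)
      finally show ?case
        unfolding laplace(2) by simp
    qed
  qed simp_all
  finally show ?thesis
    by simp
qed

lemma Vfun_has_derivative:
  fixes lm mi B x :: real and u :: "real \<Rightarrow> real"
  assumes lm: "lm > 0" and cont: "continuous_on UNIV u" and bound: "\<And>z. \<bar>u z\<bar> \<le> B"
  defines "r \<equiv> sqrt lm"
  shows "(Vfun lm mi u has_real_derivative
      mi / 2 * (left_exp_conv r (\<lambda>z. u (- z)) (- x) - left_exp_conv r u x)) (at x)"
proof -
  have r: "r > 0" unfolding r_def using lm by simp
  have [measurable]: "u \<in> borel_measurable borel"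
    using cont by (rule borel_measurable_continuous_onI)
  let ?R = "\<lambda>y. left_exp_conv r (\<lambda>z. u (- z)) (- y)"
  have V_eq: "Vfun lm mi u = (\<lambda>y. mi / (2 * r) * (left_exp_conv r u y + ?R y))"
    using Vfun_eq_integral_exp_abs[OF lm _ bound] integral_exp_abs_eq_left_exp_convs[OF r _ bound]
    unfolding r_def by auto
  have dL: "(left_exp_conv r u has_real_derivative u x - r * left_exp_conv r u x) (at x)"
    by (rule left_exp_conv_has_derivative[OF r cont bound])
  have cont_refl: "continuous_on UNIV (\<lambda>z. u (- z))"
    by (intro continuous_on_compose2[OF cont] continuous_intros) auto
  have bound_refl: "\<bar>u (- z)\<bar> \<le> B" for z
    by (rule bound)
  have "(left_exp_conv r (\<lambda>z. u (- z)) has_real_derivative u x - r * ?R x) (at (- x))"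
    using left_exp_conv_has_derivative[OF r cont_refl bound_refl, of "- x"] by simp
  then have dR: "(?R has_real_derivative (u x - r * ?R x) * - 1) (at x)"
    by (rule DERIV_chain2) (auto intro!: derivative_eq_intros)
  have "((\<lambda>y. mi / (2 * r) * (left_exp_conv r u y + ?R y)) has_real_derivative
      mi / (2 * r) * ((u x - r * left_exp_conv r u x) + (u x - r * ?R x) * - 1)) (at x)"
    by (intro DERIV_cmult DERIV_add dL dR)
  also have "mi / (2 * r) * ((u x - r * left_exp_conv r u x) + (u x - r * ?R x) * - 1)
      = mi / 2 * (?R x - left_exp_conv r u x)"
    using r by (simp add: field_simps)
  finally show ?thesis
    unfolding V_eq .
qed

lemma half_sum_inverse_le:
  fixes r k s :: real
  assumes k: "0 \<le> k" and k_r: "k < r" and s: "s > 0" and s_sq: "s\<^sup>2 = r\<^sup>2 - k\<^sup>2"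
  shows "(1 / (r + k) + 1 / (r - k)) / 2 \<le> 1 / s + k / s\<^sup>2"
proof -
  have "r \<le> s + k"
    by (rule power2_le_imp_le) (use s_sq s k in \<open>simp_all add: power2_sum\<close>)
  have "1 / (r + k) + 1 / (r - k) = (1 * (r - k) + 1 * (r + k)) / ((r + k) * (r - k))"
    by (rule add_frac_eq) (use k k_r in auto)
  then have "(1 / (r + k) + 1 / (r - k)) / 2 = r / ((r + k) * (r - k))"
    by simp
  also have "\<dots> = r / s\<^sup>2"
    using s_sq by (simp add: power2_eq_square algebra_simps)
  also have "\<dots> \<le> (s + k) / s\<^sup>2"
    using \<open>r \<le> s + k\<close> s by (simp add: divide_right_mono)
  also have "\<dots> = 1 / s + k / s\<^sup>2"
    using s by (simp add: field_simps power2_eq_square)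
  finally show ?thesis .
qed

(* Multiply (ri - k) (rj - k) (si + sj) <= (ri + rj) si sj, a consequence of r - k <= s, by rj - ri
   and use (rj - ri) (rj + ri) = (sj - si) (sj + si). *)
lemma root_gap_product_le:
  fixes ri rj k si sj :: real
  assumes k: "0 \<le> k" and k_ri: "k < ri" and ri_rj: "ri \<le> rj" and si: "si > 0" and sj: "sj > 0"
    and si_sq: "si\<^sup>2 = ri\<^sup>2 - k\<^sup>2" and sj_sq: "sj\<^sup>2 = rj\<^sup>2 - k\<^sup>2"
  shows "(rj - ri) * (ri - k) * (rj - k) \<le> (sj - si) * si * sj"
proof -
  have k_rj: "k < rj" using k_ri ri_rj by simp
  have si_lower: "ri - k \<le> si" and sj_lower: "rj - k \<le> sj"
    by (rule power2_le_imp_le; use si_sq sj_sq si sj k k_ri k_rj in \<open>simp add: power2_diff\<close>;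
        simp add: power2_eq_square algebra_simps mult_left_mono)+
  have "(ri - k) * (rj - k) * si \<le> ri * si * sj"
    using mult_mono[OF order.refl sj_lower, of "ri - k"] k si sj k_ri
    by (smt (verit, best) mult_right_mono mult.commute mult.left_commute)
  moreover have "(ri - k) * (rj - k) * sj \<le> rj * si * sj"
    using mult_mono[OF si_lower order.refl, of "rj - k"] k si sj k_rj
    by (smt (verit, best) mult_right_mono mult.commute mult.left_commute)
  ultimately have "(ri - k) * (rj - k) * (si + sj) \<le> (ri + rj) * si * sj"
    by (simp add: algebra_simps)
  then have "(rj - ri) * ((ri - k) * (rj - k) * (si + sj)) \<le> (rj - ri) * ((ri + rj) * si * sj)"
    using ri_rj by (intro mult_left_mono) auto
  also have "(rj - ri) * ((ri + rj) * si * sj) = ((rj - ri) * (ri + rj)) * (si * sj)"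
    by (simp only: mult_ac)
  also have "(rj - ri) * (ri + rj) = (sj - si) * (sj + si)"
    using si_sq sj_sq by (simp add: power2_eq_square algebra_simps)
  also have "(sj - si) * (sj + si) * (si * sj) = (sj - si) * si * sj * (si + sj)"
    by (simp only: mult_ac add.commute)
  finally show ?thesis
    using si sj by (simp add: mult.assoc mult_le_cancel_right)
qed

lemma half_sum_inverse_diff_le:
  fixes ri rj k si sj :: real
  assumes k: "0 \<le> k" and k_ri: "k < ri" and ri_rj: "ri \<le> rj" and si: "si > 0" and sj: "sj > 0"
    and si_sq: "si\<^sup>2 = ri\<^sup>2 - k\<^sup>2" and sj_sq: "sj\<^sup>2 = rj\<^sup>2 - k\<^sup>2"
  shows "((1 / (ri + k) - 1 / (rj + k)) + (1 / (ri - k) - 1 / (rj - k))) / 2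
           \<le> (1 / si - 1 / sj) + k * (rj\<^sup>2 - ri\<^sup>2) / (si\<^sup>2 * sj\<^sup>2)"
proof -
  have k_rj: "k < rj" using k_ri ri_rj by simp
  define D where "D = si\<^sup>2 * sj\<^sup>2"
  have D_pos: "D > 0" unfolding D_def using si sj by simp
  have "((1 / (ri + k) - 1 / (rj + k)) + (1 / (ri - k) - 1 / (rj - k))) / 2
      = ((rj - ri) / ((ri + k) * (rj + k)) + (rj - ri) / ((ri - k) * (rj - k))) / 2"
    using k k_ri k_rj by (simp add: field_simps)
  also have "\<dots> = ((rj - ri) * ((ri - k) * (rj - k)) + (rj - ri) * ((ri + k) * (rj + k)))
      / ((ri + k) * (rj + k) * ((ri - k) * (rj - k))) / 2"
    by (subst add_frac_eq) (use k k_ri k_rj in auto)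
  also have "\<dots> = (rj - ri) * (ri * rj + k\<^sup>2) / D"
  proof -
    have "(ri + k) * (rj + k) * ((ri - k) * (rj - k)) = D"
      unfolding D_def si_sq sj_sq by (simp add: power2_eq_square algebra_simps)
    moreover have "(rj - ri) * ((ri - k) * (rj - k)) + (rj - ri) * ((ri + k) * (rj + k))
        = 2 * ((rj - ri) * (ri * rj + k\<^sup>2))"
      by (simp add: power2_eq_square algebra_simps)
    ultimately show ?thesis by simp
  qed
  also have "\<dots> \<le> ((sj - si) * si * sj + k * (rj\<^sup>2 - ri\<^sup>2)) / D"
    using root_gap_product_le[OF assms] D_pos by (intro divide_right_mono) (simp_all add: power2_eq_square algebra_simps)
  also have "\<dots> = (1 / si - 1 / sj) + k * (rj\<^sup>2 - ri\<^sup>2) / (si\<^sup>2 * sj\<^sup>2)"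
    unfolding D_def using si sj by (simp add: field_simps power2_eq_square)
  finally show ?thesis .
qed

lemma left_right_exp_conv_bounds:
  fixes r k C x :: real and u :: "real \<Rightarrow> real"
  assumes k: "0 \<le> k" and k_r: "k < r" and [measurable]: "u \<in> borel_measurable borel"
    and u_le_C: "\<And>z. 0 \<le> u z \<and> u z \<le> C" and u_le_exp: "\<And>z. u z \<le> exp (- k * z)"
  shows "0 \<le> left_exp_conv r u x" and "left_exp_conv r u x \<le> C / r"
    and "left_exp_conv r u x \<le> exp (- k * x) / (r - k)"
    and "0 \<le> left_exp_conv r (\<lambda>z. u (- z)) (- x)" and "left_exp_conv r (\<lambda>z. u (- z)) (- x) \<le> C / r"
    and "left_exp_conv r (\<lambda>z. u (- z)) (- x) \<le> exp (- k * x) / (r + k)"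
proof -
  have "0 \<le> u z \<and> u z \<le> C * exp (- 0 * z)" "0 \<le> u z \<and> u z \<le> 1 * exp (- k * z)"
    "0 \<le> u (- z) \<and> u (- z) \<le> C * exp (- 0 * z)" "0 \<le> u (- z) \<and> u (- z) \<le> 1 * exp (- (- k) * z)" for z
    using u_le_C[of z] u_le_C[of "- z"] u_le_exp[of z] u_le_exp[of "- z"] by simp_all
  moreover have "0 < r" "- k < r" using k k_r by simp_all
  ultimately show "0 \<le> left_exp_conv r u x" "left_exp_conv r u x \<le> C / r"
    "left_exp_conv r u x \<le> exp (- k * x) / (r - k)"
    "0 \<le> left_exp_conv r (\<lambda>z. u (- z)) (- x)" "left_exp_conv r (\<lambda>z. u (- z)) (- x) \<le> C / r"
    "left_exp_conv r (\<lambda>z. u (- z)) (- x) \<le> exp (- k * x) / (r + k)"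
    using left_exp_conv_bounds[of 0 r u C x] left_exp_conv_bounds[OF k_r, of u 1 x]
      left_exp_conv_bounds[of 0 r "\<lambda>z. u (- z)" C "- x"] left_exp_conv_bounds[of "- k" r "\<lambda>z. u (- z)" 1 "- x"]
    by simp_all
qed

lemma left_right_exp_conv_diff_bounds:
  fixes r1 r2 k C x :: real and u :: "real \<Rightarrow> real"
  assumes k: "0 \<le> k" and k_r1: "k < r1" and r1_r2: "r1 \<le> r2" and [measurable]: "u \<in> borel_measurable borel"
    and u_le_C: "\<And>z. 0 \<le> u z \<and> u z \<le> C" and u_le_exp: "\<And>z. u z \<le> exp (- k * z)"
  defines "dL \<equiv> left_exp_conv r1 u x - left_exp_conv r2 u x"
    and "dR \<equiv> left_exp_conv r1 (\<lambda>z. u (- z)) (- x) - left_exp_conv r2 (\<lambda>z. u (- z)) (- x)"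
  shows "0 \<le> dL" and "dL \<le> C * (1 / r1 - 1 / r2)" and "dL \<le> exp (- k * x) * (1 / (r1 - k) - 1 / (r2 - k))"
    and "0 \<le> dR" and "dR \<le> C * (1 / r1 - 1 / r2)" and "dR \<le> exp (- k * x) * (1 / (r1 + k) - 1 / (r2 + k))"
proof -
  have "0 \<le> u z \<and> u z \<le> C * exp (- 0 * z)" "0 \<le> u z \<and> u z \<le> 1 * exp (- k * z)"
    "0 \<le> u (- z) \<and> u (- z) \<le> C * exp (- 0 * z)" "0 \<le> u (- z) \<and> u (- z) \<le> 1 * exp (- (- k) * z)" for z
    using u_le_C[of z] u_le_C[of "- z"] u_le_exp[of z] u_le_exp[of "- z"] by simp_all
  moreover have "0 < r1" "- k < r1" using k k_r1 by simp_all
  ultimately show "0 \<le> dL" "dL \<le> C * (1 / r1 - 1 / r2)" "dL \<le> exp (- k * x) * (1 / (r1 - k) - 1 / (r2 - k))"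
    "0 \<le> dR" "dR \<le> C * (1 / r1 - 1 / r2)" "dR \<le> exp (- k * x) * (1 / (r1 + k) - 1 / (r2 + k))"
    unfolding dL_def dR_def
    using left_exp_conv_diff_bounds[of 0 r1 r2 u C x] left_exp_conv_diff_bounds[OF k_r1 r1_r2, of u 1 x]
      left_exp_conv_diff_bounds[of 0 r1 r2 "\<lambda>z. u (- z)" C "- x"]
      left_exp_conv_diff_bounds[of "- k" r1 r2 "\<lambda>z. u (- z)" 1 "- x"] r1_r2
    by simp_all
qed

lemma abs_diff_left_exp_convs_le:
  fixes l k C x :: real and u :: "real \<Rightarrow> real"
  assumes k: "0 \<le> k" and k_l: "k\<^sup>2 < l" and u_meas: "u \<in> borel_measurable borel"
    and u_le_C: "\<And>z. 0 \<le> u z \<and> u z \<le> C" and u_le_exp: "\<And>z. u z \<le> exp (- k * z)"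
  shows "\<bar>left_exp_conv (sqrt l) (\<lambda>z. u (- z)) (- x) - left_exp_conv (sqrt l) u x\<bar> / 2
           \<le> min (C / sqrt l) ((1 / sqrt (l - k\<^sup>2) + k / (l - k\<^sup>2)) * exp (- k * x))"
proof -
  define r where "r = sqrt l"
  define s where "s = sqrt (l - k\<^sup>2)"
  define L where "L = left_exp_conv r u x"
  define R where "R = left_exp_conv r (\<lambda>z. u (- z)) (- x)"
  have k_r: "k < r"
    unfolding r_def using k_l k by (simp add: real_less_rsqrt)
  have s: "s > 0" and s_sq: "s\<^sup>2 = r\<^sup>2 - k\<^sup>2" and s_sq': "s\<^sup>2 = l - k\<^sup>2"
    unfolding s_def r_def using k_l order.strict_trans1[OF zero_le_power2 k_l] by simp_all
  note bounds = left_right_exp_conv_bounds[OF k k_r u_meas u_le_C u_le_exp, of x, folded L_def R_def]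
  have abs_le: "\<bar>R - L\<bar> / 2 \<le> (R + L) / 2"
    using bounds(1,4) by simp
  have "(R + L) / 2 \<le> (C / r + C / r) / 2"
    using bounds(2,5) by (intro divide_right_mono add_mono) auto
  then have bound_C: "\<bar>R - L\<bar> / 2 \<le> C / r"
    using abs_le by simp
  have "(R + L) / 2 \<le> (1 / (r + k) + 1 / (r - k)) / 2 * exp (- k * x)"
    using bounds(3,6) by (simp add: field_simps)
  also have "\<dots> \<le> (1 / s + k / s\<^sup>2) * exp (- k * x)"
    by (intro mult_right_mono half_sum_inverse_le[OF k k_r s s_sq]) simp
  finally have bound_exp: "\<bar>R - L\<bar> / 2 \<le> (1 / s + k / (l - k\<^sup>2)) * exp (- k * x)"
    using abs_le unfolding s_sq' by simp
  show ?thesis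
    using bound_C bound_exp unfolding R_def L_def r_def s_def by simp
qed

lemma diff_left_exp_convs_le_ordered:
  fixes l1 l2 k C x :: real and u :: "real \<Rightarrow> real"
  assumes k: "0 \<le> k" and k_l1: "k\<^sup>2 < l1" and l1_l2: "l1 \<le> l2" and u_meas: "u \<in> borel_measurable borel"
    and u_le_C: "\<And>z. 0 \<le> u z \<and> u z \<le> C" and u_le_exp: "\<And>z. u z \<le> exp (- k * z)"
  defines "L \<equiv> \<lambda>l. left_exp_conv (sqrt l) u x"
    and "R \<equiv> \<lambda>l. left_exp_conv (sqrt l) (\<lambda>z. u (- z)) (- x)"
  shows "(\<bar>R l1 - R l2\<bar> + \<bar>L l1 - L l2\<bar>) / 2
           \<le> min (C * \<bar>sqrt l1 - sqrt l2\<bar> / sqrt (l1 * l2))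
                 ((\<bar>1 / sqrt (l1 - k\<^sup>2) - 1 / sqrt (l2 - k\<^sup>2)\<bar>
                   + k * \<bar>l1 - l2\<bar> / ((l1 - k\<^sup>2) * (l2 - k\<^sup>2))) * exp (- k * x))"
proof -
  define r1 where "r1 = sqrt l1"
  define r2 where "r2 = sqrt l2"
  define s1 where "s1 = sqrt (l1 - k\<^sup>2)"
  define s2 where "s2 = sqrt (l2 - k\<^sup>2)"
  have k_l2: "k\<^sup>2 < l2" using k_l1 l1_l2 by simp
  have l1: "l1 > 0" and l2: "l2 > 0"
    using k_l1 k_l2 by (auto intro: order.strict_trans1[OF zero_le_power2])
  have k_r1: "k < r1" and r1_r2: "r1 \<le> r2"
    unfolding r1_def r2_def using k_l1 k l1_l2 by (simp_all add: real_less_rsqrt)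
  have r1: "r1 > 0" and r2: "r2 > 0" using k k_r1 r1_r2 by auto
  have s1: "s1 > 0" and s2: "s2 > 0" and s1_s2: "s1 \<le> s2"
    unfolding s1_def s2_def using k_l1 k_l2 l1_l2 by simp_all
  have r1_sq: "r1\<^sup>2 = l1" and r2_sq: "r2\<^sup>2 = l2" and s1_sq: "s1\<^sup>2 = l1 - k\<^sup>2" and s2_sq: "s2\<^sup>2 = l2 - k\<^sup>2"
    unfolding r1_def r2_def s1_def s2_def using l1 l2 k_l1 k_l2 by simp_all
  define dL where "dL = left_exp_conv r1 u x - left_exp_conv r2 u x"
  define dR where "dR = left_exp_conv r1 (\<lambda>z. u (- z)) (- x) - left_exp_conv r2 (\<lambda>z. u (- z)) (- x)"
  note d = left_right_exp_conv_diff_bounds[OF k k_r1 r1_r2 u_meas u_le_C u_le_exp, of x, folded dL_def dR_def]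
  have "(\<bar>dR\<bar> + \<bar>dL\<bar>) / 2 \<le> C * (1 / r1 - 1 / r2)"
    using d by simp
  also have "\<dots> = C * \<bar>r1 - r2\<bar> / (r1 * r2)"
    using r1 r2 r1_r2 by (simp add: field_simps)
  finally have bound_C: "(\<bar>dR\<bar> + \<bar>dL\<bar>) / 2 \<le> C * \<bar>sqrt l1 - sqrt l2\<bar> / sqrt (l1 * l2)"
    unfolding r1_def r2_def real_sqrt_mult .
  have "(\<bar>dR\<bar> + \<bar>dL\<bar>) / 2
      \<le> ((1 / (r1 + k) - 1 / (r2 + k)) + (1 / (r1 - k) - 1 / (r2 - k))) / 2 * exp (- k * x)"
    using d by (simp add: field_simps)
  also have "\<dots> \<le> ((1 / s1 - 1 / s2) + k * (r2\<^sup>2 - r1\<^sup>2) / (s1\<^sup>2 * s2\<^sup>2)) * exp (- k * x)"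
    by (intro mult_right_mono half_sum_inverse_diff_le[OF k k_r1 r1_r2 s1 s2])
      (simp_all add: s1_sq s2_sq r1_sq r2_sq)
  also have "(1 / s1 - 1 / s2) + k * (r2\<^sup>2 - r1\<^sup>2) / (s1\<^sup>2 * s2\<^sup>2)
      = \<bar>1 / s1 - 1 / s2\<bar> + k * \<bar>l1 - l2\<bar> / ((l1 - k\<^sup>2) * (l2 - k\<^sup>2))"
    using frac_le[of 1 1 s1 s2] s1 s1_s2 l1_l2 unfolding s1_sq s2_sq r1_sq r2_sq by simp
  finally have bound_exp: "(\<bar>dR\<bar> + \<bar>dL\<bar>) / 2
      \<le> (\<bar>1 / sqrt (l1 - k\<^sup>2) - 1 / sqrt (l2 - k\<^sup>2)\<bar> + k * \<bar>l1 - l2\<bar> / ((l1 - k\<^sup>2) * (l2 - k\<^sup>2))) * exp (- k * x)"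
    unfolding s1_def s2_def .
  show ?thesis
    using bound_C bound_exp unfolding dR_def dL_def R_def L_def r1_def r2_def by simp
qed

lemma diff_left_exp_convs_le:
  fixes l1 l2 k C x :: real and u :: "real \<Rightarrow> real"
  assumes k: "0 \<le> k" and k_l1: "k\<^sup>2 < l1" and k_l2: "k\<^sup>2 < l2" and u_meas: "u \<in> borel_measurable borel"
    and u_le_C: "\<And>z. 0 \<le> u z \<and> u z \<le> C" and u_le_exp: "\<And>z. u z \<le> exp (- k * z)"
  defines "L \<equiv> \<lambda>l. left_exp_conv (sqrt l) u x"
    and "R \<equiv> \<lambda>l. left_exp_conv (sqrt l) (\<lambda>z. u (- z)) (- x)"
  shows "(\<bar>R l1 - R l2\<bar> + \<bar>L l1 - L l2\<bar>) / 2
           \<le> min (C * \<bar>sqrt l1 - sqrt l2\<bar> / sqrt (l1 * l2))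
                 ((\<bar>1 / sqrt (l1 - k\<^sup>2) - 1 / sqrt (l2 - k\<^sup>2)\<bar>
                   + k * \<bar>l1 - l2\<bar> / ((l1 - k\<^sup>2) * (l2 - k\<^sup>2))) * exp (- k * x))"
proof (cases "l1 \<le> l2")
  case True
  show ?thesis
    unfolding L_def R_def by (rule diff_left_exp_convs_le_ordered[OF k k_l1 True u_meas u_le_C u_le_exp])
next
  case False
  then show ?thesis
    using diff_left_exp_convs_le_ordered[OF k k_l2 _ u_meas u_le_C u_le_exp, of l1 x]
    unfolding L_def R_def by (simp add: abs_minus_commute mult.commute add.commute)
qed

lemma deriv_chi_Vfun_diff_bound:
  fixes li lj mi mj ci cj a m C x :: real and u :: "real \<Rightarrow> real"
  assumes li: "li > 0" and lj: "lj > 0" and cj: "cj \<ge> 0" and mj: "mj \<ge> 0"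
    and a: "a > 0" and m: "m \<ge> 0" and m_li: "a * m\<^sup>2 < li" and m_lj: "a * m\<^sup>2 < lj"
    and cont: "continuous_on UNIV u" and u_le_C: "\<And>z. 0 \<le> u z \<and> u z \<le> C"
    and u_le_phi: "\<And>z. u z \<le> phi a m z"
  shows "\<bar>deriv (\<lambda>y. ci * Vfun li mi u y - cj * Vfun lj mj u y) x\<bar>
    \<le> \<bar>ci * mi - cj * mj\<bar> *
        min (C / sqrt li)
            ((1 / sqrt (li - a * m\<^sup>2) + m * sqrt a / (li - a * m\<^sup>2)) * phi a m x)
      + cj * mj *
        min (C * \<bar>sqrt li - sqrt lj\<bar> / sqrt (li * lj))
            ((\<bar>1 / sqrt (li - a * m\<^sup>2) - 1 / sqrt (lj - a * m\<^sup>2)\<bar>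
              + m * sqrt a * \<bar>li - lj\<bar> / ((li - a * m\<^sup>2) * (lj - a * m\<^sup>2))) * phi a m x)"
proof -
  define k where "k = sqrt a * m"
  have k: "k \<ge> 0" and k_sq: "k\<^sup>2 = a * m\<^sup>2" and m_sqrt_a: "m * sqrt a = k"
    unfolding k_def using a m by (simp_all add: power_mult_distrib)
  have phi_eq: "phi a m z = exp (- k * z)" for z
    unfolding phi_def k_def by simp
  have [measurable]: "u \<in> borel_measurable borel"
    using cont by (rule borel_measurable_continuous_onI)
  have bound: "\<bar>u z\<bar> \<le> C" and u_le_exp: "u z \<le> exp (- k * z)" for z
    using u_le_C[of z] u_le_phi[of z] unfolding phi_eq by simp_all
  define L where "L = (\<lambda>l. left_exp_conv (sqrt l) u x)"
  define R where "R = (\<lambda>l. left_exp_conv (sqrt l) (\<lambda>z. u (- z)) (- x))"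
  have "((\<lambda>y. ci * Vfun li mi u y - cj * Vfun lj mj u y) has_real_derivative
      ci * (mi / 2 * (R li - L li)) - cj * (mj / 2 * (R lj - L lj))) (at x)"
    unfolding L_def R_def
    by (intro DERIV_diff DERIV_cmult Vfun_has_derivative[OF li cont bound] Vfun_has_derivative[OF lj cont bound])
  then have "deriv (\<lambda>y. ci * Vfun li mi u y - cj * Vfun lj mj u y) x
      = ci * (mi / 2 * (R li - L li)) - cj * (mj / 2 * (R lj - L lj))"
    by (rule DERIV_imp_deriv)
  also have "\<dots> = (ci * mi - cj * mj) * ((R li - L li) / 2) + cj * mj * (((R li - R lj) - (L li - L lj)) / 2)"
    by (simp add: field_simps)
  also have "\<bar>\<dots>\<bar> \<le> \<bar>ci * mi - cj * mj\<bar> * (\<bar>R li - L li\<bar> / 2)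
      + cj * mj * ((\<bar>R li - R lj\<bar> + \<bar>L li - L lj\<bar>) / 2)"
    using cj mj abs_triangle_ineq4[of "R li - R lj" "L li - L lj"]
    by (auto simp: abs_mult intro!: order.trans[OF abs_triangle_ineq] add_mono mult_left_mono divide_right_mono)
  also have "\<dots> \<le> \<bar>ci * mi - cj * mj\<bar> *
        min (C / sqrt li) ((1 / sqrt (li - k\<^sup>2) + k / (li - k\<^sup>2)) * exp (- k * x))
      + cj * mj *
        min (C * \<bar>sqrt li - sqrt lj\<bar> / sqrt (li * lj))
            ((\<bar>1 / sqrt (li - k\<^sup>2) - 1 / sqrt (lj - k\<^sup>2)\<bar>
              + k * \<bar>li - lj\<bar> / ((li - k\<^sup>2) * (lj - k\<^sup>2))) * exp (- k * x))"
    unfolding L_def R_def using cj mj m_li m_lj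
    by (intro add_mono mult_left_mono abs_diff_left_exp_convs_le diff_left_exp_convs_le u_le_exp)
      (simp_all add: k k_sq u_le_C)
  finally show ?thesis
    unfolding k_sq m_sqrt_a phi_eq .
qed

(* Only the positivity of the parameters, m < sqrt (lam i / a) and 0 <= u <= U+ are used. *)
theorem lemma2p4:
  fixes a b d m mt :: real and chi lam mu :: "nat \<Rightarrow> real"
  assumes "a > 0" and "b > 0"
    and "chi 1 \<ge> 0" and "chi 2 \<ge> 0"
    and "lam 1 > 0" and "lam 2 > 0" and "mu 1 > 0" and "mu 2 > 0"
    and "b + chi 2 * mu 2 > chi 1 * mu 1 + Mconst chi lam mu"
    and "0 < m" and "m < min 1 (min (sqrt (lam 1 / a)) (sqrt (lam 2 / a)))"
    and "m < mt" and "mt < min (min 1 (2 * m)) (min (sqrt (lam 1 / a)) (sqrt (lam 2 / a)))"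
    and "d > 1"
  shows "\<forall>i\<in>{1,2}. \<forall>j\<in>{1,2}. \<forall>x. \<forall>u\<in>Eset a b chi lam mu d m mt.
    \<bar>deriv (\<lambda>y. chi i * Vfun (lam i) (mu i) u y - chi j * Vfun (lam j) (mu j) u y) x\<bar>
    \<le> \<bar>chi i * mu i - chi j * mu j\<bar> *
        min (C0 a b chi lam mu / sqrt (lam i))
            ((1 / sqrt (lam i - a * m\<^sup>2) + m * sqrt a / (lam i - a * m\<^sup>2)) * phi a m x)
      + chi j * mu j *
        min (C0 a b chi lam mu * \<bar>sqrt (lam i) - sqrt (lam j)\<bar> / sqrt (lam i * lam j))
            ((\<bar>1 / sqrt (lam i - a * m\<^sup>2) - 1 / sqrt (lam j - a * m\<^sup>2)\<bar>
              + m * sqrt a * \<bar>lam i - lam j\<bar> / ((lam i - a * m\<^sup>2) * (lam j - a * m\<^sup>2))) * phi a m x)"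
proof -
  have lam: "lam n > 0" and m_lam: "a * m\<^sup>2 < lam n" if "n \<in> {1, 2}" for n
  proof -
    show lam_pos: "lam n > 0" using that assms by auto
    have "m\<^sup>2 < (sqrt (lam n / a))\<^sup>2"
      using that assms by (intro power_strict_mono) auto
    also have "\<dots> = lam n / a"
      using lam_pos \<open>a > 0\<close> by simp
    finally show "a * m\<^sup>2 < lam n"
      using \<open>a > 0\<close> by (simp add: field_simps)
  qed
  have chi: "chi n \<ge> 0" and mu: "mu n \<ge> 0" if "n \<in> {1, 2}" for n
    using that assms by auto
  have u_cont: "continuous_on UNIV u"
    and u_le_C: "\<And>z. 0 \<le> u z \<and> u z \<le> C0 a b chi lam mu"
    and u_le_phi: "\<And>z. u z \<le> phi a m z" if "u \<in> Eset a b chi lam mu d m mt" for u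
    using that unfolding Eset_def Cb_unif_def Uminus_def Uplus_def
    by (auto intro: uniformly_continuous_imp_continuous)
  show ?thesis
    using \<open>m > 0\<close>
    by (intro ballI allI deriv_chi_Vfun_diff_bound[OF lam lam chi mu \<open>a > 0\<close> _ m_lam m_lam u_cont u_le_C u_le_phi])
      auto
qed

end
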